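(* Let $Q=(q_n)_{n\ge1}$ be a basic sequence that is infinite in limit, and let $F\in\Gamma_Q$. Then there exists a sequence $F_1,F_2,F_3,\dots$ of elements of $\Gamma_Q$ such that $F_n\ne F$ for all $n$ and $\lim_{n\to\infty}d(F,F_n)=0$.
   Context: A basic sequence is a sequence $Q=(q_n)_{n\ge1}$ of integers with $q_n\ge 2$; it is infinite in limit if $q_n\to\infty$. $\mathbb{N}$ denotes the positive integers. For each positive integer $j$ let $\nu_j=\min\{N : q_m\ge 2j^2 \text{ for all } m\ge N\}$. Define $l_1=\max(\nu_2-1,1)$ and, recursively for $i\ge 2$, $l_i=\max\big(\min\{k\in\mathbb{N} : l_1+2l_2+\cdots+(i-1)l_{i-1}+ik\ge \nu_{i+1}-1\},1\big)$. Put $L_i=\sum_{j=1}^i jl_j$ (with $L_0=0$). Let $S_Q=\{(a,b,c)\in\mathbb{N}^3 : b\le l_a,\ c\le a\}$ and $\phi_Q(a,b,c)=L_{a-1}+(b-1)a+c$; $\phi_Q$ is a bijection $S_Q\to\mathbb{N}$. A $Q$-special sequence is a family of integers $F=(F_{(a,b,c)})_{(a,b,c)\in S_Q}$ with $F_{(a,b,1)}=0$ for all $(a,b,1)\in S_Q$ and $\frac{F_{(a,b,c)}}{q_{\phi_Q(a,b,c)}}\in\left[\frac{c-1}{a}-\frac{1}{2a^2},\frac{c-1}{a}+\frac{1}{2a^2}\right]$ for $(a,b,c)\in S_Q$ with $c>1$. Let $\Gamma_Q$ be the set of $Q$-special sequences, and for $F\in\Gamma_Q$ put $E_{F,n}=F_{\phi_Q^{-1}(n)}$.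 For $F_1\ne F_2$ in $\Gamma_Q$ let $\zeta_{F_1,F_2}=\min\{n : E_{F_1,n}\ne E_{F_2,n}\}$ and define $d(F_1,F_2)=\frac{1}{q_1q_2\cdots q_{\zeta_{F_1,F_2}-1}}$ (empty product equal to $1$); set $d(F,F)=0$. *)

theory Defs
  imports Complex_Main
begin

text \<open>A sequence Q = (q_n)_{n>=1} is modelled as q :: nat => int; the value q 0 is irrelevant.\<close>

definition basic_seq :: "(nat \<Rightarrow> int) \<Rightarrow> bool" where
  "basic_seq q \<longleftrightarrow> (\<forall>n\<ge>1. q n \<ge> 2)"

definition infinite_in_limit :: "(nat \<Rightarrow> int) \<Rightarrow> bool" where
  "infinite_in_limit q \<longleftrightarrow> filterlim q at_top sequentially"

definition nu :: "(nat \<Rightarrow> int) \<Rightarrow> nat \<Rightarrow> nat" where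
  "nu q j = (LEAST N. N \<ge> 1 \<and> (\<forall>m\<ge>N. q m \<ge> 2 * int j ^ 2))"

definition l_step :: "(nat \<Rightarrow> int) \<Rightarrow> nat \<Rightarrow> nat \<Rightarrow> nat" where
  "l_step q i Lprev =
     (if i = 1 then max (nu q 2 - 1) 1
      else max (LEAST k. k \<ge> 1 \<and> Lprev + i * k \<ge> nu q (i + 1) - 1) 1)"

fun Lseq :: "(nat \<Rightarrow> int) \<Rightarrow> nat \<Rightarrow> nat" where
  "Lseq q 0 = 0"
| "Lseq q (Suc i) = Lseq q i + Suc i * l_step q (Suc i) (Lseq q i)"

definition lseq :: "(nat \<Rightarrow> int) \<Rightarrow> nat \<Rightarrow> nat" where
  "lseq q i = l_step q i (Lseq q (i - 1))"

definition S_Q :: "(nat \<Rightarrow> int) \<Rightarrow> (nat \<times> nat \<times> nat) set" where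
  "S_Q q = {(a, b, c). 1 \<le> a \<and> 1 \<le> b \<and> 1 \<le> c \<and> b \<le> lseq q a \<and> c \<le> a}"

definition phi_Q :: "(nat \<Rightarrow> int) \<Rightarrow> nat \<times> nat \<times> nat \<Rightarrow> nat" where
  "phi_Q q x = (case x of (a, b, c) \<Rightarrow> Lseq q (a - 1) + (b - 1) * a + c)"

text \<open>Q-special sequences: families indexed by S_Q, represented as functions that
  vanish outside S_Q (so that equality of families is equality of functions).\<close>
definition Gamma_Q :: "(nat \<Rightarrow> int) \<Rightarrow> (nat \<times> nat \<times> nat \<Rightarrow> int) set" where
  "Gamma_Q q = {F. (\<forall>x. x \<notin> S_Q q \<longrightarrow> F x = 0)
     \<and> (\<forall>(a, b, c) \<in> S_Q q. c = 1 \<longrightarrow> F (a, b, c) = 0)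
     \<and> (\<forall>(a, b, c) \<in> S_Q q. c > 1 \<longrightarrow>
          real_of_int (F (a, b, c)) / real_of_int (q (phi_Q q (a, b, c)))
            \<in> {(real c - 1) / real a - 1 / (2 * real a ^ 2) ..
               (real c - 1) / real a + 1 / (2 * real a ^ 2)})}"

definition E_seq :: "(nat \<Rightarrow> int) \<Rightarrow> (nat \<times> nat \<times> nat \<Rightarrow> int) \<Rightarrow> nat \<Rightarrow> int" where
  "E_seq q F n = F (THE x. x \<in> S_Q q \<and> phi_Q q x = n)"

definition zeta :: "(nat \<Rightarrow> int) \<Rightarrow> (nat \<times> nat \<times> nat \<Rightarrow> int) \<Rightarrow> (nat \<times> nat \<times> nat \<Rightarrow> int) \<Rightarrow> nat" where
  "zeta q F1 F2 = (LEAST n. n \<ge> 1 \<and> E_seq q F1 n \<noteq> E_seq q F2 n)"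

definition dQ :: "(nat \<Rightarrow> int) \<Rightarrow> (nat \<times> nat \<times> nat \<Rightarrow> int) \<Rightarrow> (nat \<times> nat \<times> nat \<Rightarrow> int) \<Rightarrow> real" where
  "dQ q F1 F2 = (if F1 = F2 then 0
     else 1 / (\<Prod>i\<in>{1..<zeta q F1 F2}. real_of_int (q i)))"

end

theory Submission
  imports Defs
begin

text \<open>Let a \<ge> 2. Since q_m \<ge> 2a^2 from the index \<nu>_a on, and the block lengths l_i were chosen so
  that the a-th block starts beyond \<nu>_a, the position (a,1,2) carries an admissible interval
  of length q/a^2 \<ge> 2 around q/a. It therefore contains an integer different from F(a,1,2), and
  changing F there alone gives an element of \<Gamma>_Q that first differs from F at the index
  \<phi>_Q(a,1,2) > a, hence at distance at most 2^{-a} from F, because every q_i \<ge> 2.\<close>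

lemma l_step_ge_1: "1 \<le> l_step q i L"
  by (simp add: l_step_def)

lemma strict_mono_Lseq: "strict_mono (Lseq q)"
  unfolding strict_mono_Suc_iff using l_step_ge_1[of q] by (simp add: Suc_le_eq)

lemma Lseq_ge: "i \<le> Lseq q i"
  using strict_mono_imp_increasing[OF strict_mono_Lseq] .

lemma Lseq_eq: "1 \<le> a \<Longrightarrow> Lseq q a = Lseq q (a - 1) + a * lseq q a"
  by (cases a) (auto simp: lseq_def)

lemma phi_Q_bounds:
  assumes "(a, b, c) \<in> S_Q q"
  shows "Lseq q (a - 1) < phi_Q q (a, b, c)" and "phi_Q q (a, b, c) \<le> Lseq q a"
proof -
  from assms have h: "1 \<le> a" "1 \<le> b" "1 \<le> c" "b \<le> lseq q a" "c \<le> a"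
    by (auto simp: S_Q_def)
  have "(b - 1) * a + c \<le> (lseq q a - 1) * a + a"
    using h by (intro add_mono mult_le_mono1) auto
  also have "\<dots> = a * lseq q a"
    using l_step_ge_1[of q a] by (simp add: lseq_def algebra_simps)
  finally show "phi_Q q (a, b, c) \<le> Lseq q a"
    using h Lseq_eq[of a q] by (simp add: phi_Q_def)
  show "Lseq q (a - 1) < phi_Q q (a, b, c)"
    using h by (simp add: phi_Q_def)
qed

lemma inj_on_phi_Q: "inj_on (phi_Q q) (S_Q q)"
proof (rule inj_onI)
  fix x y assume x: "x \<in> S_Q q" and y: "y \<in> S_Q q" and eq: "phi_Q q x = phi_Q q y"
  obtain a b c a' b' c' where xy: "x = (a, b, c)" "y = (a', b', c')"
    by (cases x, cases y) auto
  have "a = a'"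
  proof (rule ccontr)
    assume "a \<noteq> a'"
    then consider "a \<le> a' - 1" | "a' \<le> a - 1" by linarith
    then show False
    proof cases
      case 1
      then have "Lseq q a \<le> Lseq q (a' - 1)"
        using strict_mono_less_eq[OF strict_mono_Lseq] by blast
      then show False
        using phi_Q_bounds[of a b c q] phi_Q_bounds[of a' b' c' q] x y xy eq by simp
    next
      case 2
      then have "Lseq q a' \<le> Lseq q (a - 1)"
        using strict_mono_less_eq[OF strict_mono_Lseq] by blast
      then show False
        using phi_Q_bounds[of a b c q] phi_Q_bounds[of a' b' c' q] x y xy eq by simp
    qed
  qed
  from x y xy \<open>a = a'\<close> have h: "1 \<le> b" "1 \<le> c" "c \<le> a" "1 \<le> b'" "1 \<le> c'" "c' \<le> a"
    by (auto simp: S_Q_def)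
  have digits: "(b - 1) * a + (c - 1) = (b' - 1) * a + (c' - 1)"
    using eq h unfolding xy \<open>a = a'\<close> by (simp add: phi_Q_def)
  have "c - 1 < a" "c' - 1 < a"
    using h by auto
  then have "b - 1 = b' - 1 \<and> c - 1 = c' - 1"
    using arg_cong[OF digits, of "\<lambda>n. n div a"] arg_cong[OF digits, of "\<lambda>n. n mod a"]
    by simp
  then show "x = y"
    using h xy \<open>a = a'\<close> by auto
qed

lemma phi_Q_surj:
  assumes "1 \<le> n"
  shows "\<exists>x\<in>S_Q q. phi_Q q x = n"
proof -
  define a where "a = (LEAST a. n \<le> Lseq q a)"
  have n_le: "n \<le> Lseq q a"
    unfolding a_def using Lseq_ge by (rule LeastI)
  have "a \<noteq> 0"
    using assms n_le by (intro notI) simp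
  moreover have "\<not> n \<le> Lseq q (a - 1)"
    using \<open>a \<noteq> 0\<close> unfolding a_def by (intro not_less_Least) simp
  ultimately have a: "1 \<le> a" and less_n: "Lseq q (a - 1) < n"
    by auto
  define m where "m = n - Lseq q (a - 1) - 1"
  have "m < lseq q a * a"
    using n_le less_n Lseq_eq[OF a, of q] unfolding m_def by (simp add: mult.commute)
  then have "m div a < lseq q a"
    by (simp add: less_mult_imp_div_less)
  moreover have "m mod a < a"
    using a by simp
  ultimately have "(a, m div a + 1, m mod a + 1) \<in> S_Q q"
    using a by (simp add: S_Q_def Suc_le_eq)
  moreover have "phi_Q q (a, m div a + 1, m mod a + 1) = n"
    using less_n unfolding phi_Q_def m_def by simp
  ultimately show ?thesis
    by blast
qed

lemma bij_betw_phi_Q: "bij_betw (phi_Q q) (S_Q q) {1..}"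
proof -
  have "phi_Q q ` S_Q q \<subseteq> {1..}"
    using phi_Q_bounds(1) by fastforce
  moreover have "{1..} \<subseteq> phi_Q q ` S_Q q"
    using phi_Q_surj[of _ q] by (auto simp: image_iff)
  ultimately show ?thesis
    using inj_on_phi_Q by (auto simp: bij_betw_def)
qed

lemma E_seq_phi_Q: "x \<in> S_Q q \<Longrightarrow> E_seq q F (phi_Q q x) = F x"
  unfolding E_seq_def using inj_on_phi_Q[of q]
  by (subst the_equality[of _ x]) (auto dest: inj_onD)

lemma zeta_fun_upd:
  assumes x: "x \<in> S_Q q" and v: "v \<noteq> F x"
  shows "zeta q F (F(x := v)) = phi_Q q x"
  unfolding zeta_def
proof (rule Least_equality)
  show "1 \<le> phi_Q q x \<and> E_seq q F (phi_Q q x) \<noteq> E_seq q (F(x := v)) (phi_Q q x)"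
    using x v bij_betw_apply[OF bij_betw_phi_Q] by (simp add: E_seq_phi_Q)
next
  fix n assume n: "1 \<le> n \<and> E_seq q F n \<noteq> E_seq q (F(x := v)) n"
  then obtain y where y: "y \<in> S_Q q" "phi_Q q y = n"
    using phi_Q_surj by blast
  then have "y = x"
    using n by (auto simp: E_seq_phi_Q split: if_splits)
  then show "phi_Q q x \<le> n"
    using y by simp
qed

lemma prod_q_ge_power:
  assumes "basic_seq q"
  shows "2 ^ (n - 1) \<le> (\<Prod>i\<in>{1..<n}. real_of_int (q i))"
proof -
  have "(\<Prod>i\<in>{1..<n}. 2) \<le> (\<Prod>i\<in>{1..<n}. real_of_int (q i))"
    using assms by (intro prod_mono) (auto simp: basic_seq_def)
  then show ?thesis
    by simp
qed

lemma dQ_nonneg: "basic_seq q \<Longrightarrow> 0 \<le> dQ q F G"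
  using prod_q_ge_power[of q "zeta q F G"] unfolding dQ_def
  by (simp add: order.trans[OF zero_le_power[of 2]])

lemma dQ_le_half_power:
  assumes "basic_seq q" "F \<noteq> G"
  shows "dQ q F G \<le> (1 / 2) ^ (zeta q F G - 1)"
proof -
  have bound: "2 ^ (zeta q F G - 1) \<le> (\<Prod>i\<in>{1..<zeta q F G}. real_of_int (q i))"
    by (rule prod_q_ge_power[OF assms(1)])
  have "dQ q F G = 1 / (\<Prod>i\<in>{1..<zeta q F G}. real_of_int (q i))"
    using assms(2) by (simp add: dQ_def)
  also have "\<dots> \<le> 1 / 2 ^ (zeta q F G - 1)"
    using bound by (intro divide_left_mono mult_pos_pos less_le_trans[OF _ bound]) auto
  finally show ?thesis
    by (simp add: power_one_over)
qed

lemma q_ge_beyond_nu: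
  assumes "infinite_in_limit q" "nu q j \<le> m"
  shows "2 * int j ^ 2 \<le> q m"
proof -
  have "\<forall>\<^sub>F m in sequentially. 2 * int j ^ 2 \<le> q m"
    using assms(1) unfolding infinite_in_limit_def filterlim_at_top by blast
  then obtain N where N: "\<forall>m\<ge>N. 2 * int j ^ 2 \<le> q m"
    by (auto simp: eventually_sequentially)
  have "\<exists>N. 1 \<le> N \<and> (\<forall>m\<ge>N. 2 * int j ^ 2 \<le> q m)"
    using N by (intro exI[of _ "max N 1"]) auto
  then have "\<forall>m\<ge>nu q j. 2 * int j ^ 2 \<le> q m"
    unfolding nu_def by (rule LeastI2_ex) blast
  then show ?thesis
    using assms(2) by blast
qed

lemma nu_le_Lseq:
  assumes "1 \<le> i"
  shows "nu q (i + 1) \<le> Lseq q i + 1"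
proof (cases "i = 1")
  case True
  then show ?thesis
    by (simp add: l_step_def numeral_2_eq_2)
next
  case False
  obtain j where i: "i = Suc j"
    using assms by (cases i) auto
  define P where "P k \<longleftrightarrow> 1 \<le> k \<and> nu q (i + 1) - 1 \<le> Lseq q j + i * k" for k
  have "1 * max (nu q (i + 1)) 1 \<le> i * max (nu q (i + 1)) 1"
    using assms by (rule mult_le_mono1)
  then have "P (max (nu q (i + 1)) 1)"
    unfolding P_def by linarith
  then have P: "P (LEAST k. P k)"
    by (rule LeastI)
  have "Lseq q j + i * (LEAST k. P k) \<le> Lseq q j + i * max (LEAST k. P k) 1"
    by simp
  also have "\<dots> = Lseq q i"
    using False i by (simp add: l_step_def P_def)
  finally show ?thesis
    using P unfolding P_def by linarith
qed

lemma exists_int_avoiding: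
  fixes lo hi :: real and w :: int
  assumes "lo + 2 \<le> hi"
  shows "\<exists>v::int. v \<noteq> w \<and> lo \<le> v \<and> v \<le> hi"
proof -
  have bounds: "lo \<le> of_int (\<lfloor>lo\<rfloor> + 1)" "of_int (\<lfloor>lo\<rfloor> + 1) \<le> hi"
    "lo \<le> of_int (\<lfloor>lo\<rfloor> + 2)" "of_int (\<lfloor>lo\<rfloor> + 2) \<le> hi"
    using assms by linarith+
  show ?thesis
  proof (cases "w = \<lfloor>lo\<rfloor> + 1")
    case True
    then have "\<lfloor>lo\<rfloor> + 2 \<noteq> w"
      by simp
    then show ?thesis
      using bounds by blast
  next
    case False
    then have "\<lfloor>lo\<rfloor> + 1 \<noteq> w"
      by simp
    then show ?thesis
      using bounds by blast
  qed
qed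

lemma exists_admissible_value_avoiding:
  fixes Q :: real and w :: int
  assumes "1 \<le> a" "2 * real a ^ 2 \<le> Q"
  shows "\<exists>v::int. v \<noteq> w \<and> v / Q \<in> {(real c - 1) / real a - 1 / (2 * real a ^ 2) ..
                                      (real c - 1) / real a + 1 / (2 * real a ^ 2)}"
proof -
  define lo where "lo = Q * ((real c - 1) / real a - 1 / (2 * real a ^ 2))"
  define hi where "hi = Q * ((real c - 1) / real a + 1 / (2 * real a ^ 2))"
  have a: "0 < real a" and Q: "0 < Q"
    using assms by (auto intro: less_le_trans[of 0 "2 * real a ^ 2"])
  have "hi - lo = Q / real a ^ 2"
    unfolding hi_def lo_def by (simp add: field_simps)
  also have "2 \<le> Q / real a ^ 2"
    using assms(2) a by (simp add: pos_le_divide_eq)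
  finally obtain v :: int where "v \<noteq> w" "lo \<le> v" "v \<le> hi"
    using exists_int_avoiding[of lo hi w] by auto
  then show ?thesis
    using Q unfolding lo_def hi_def
    by (intro exI[of _ v]) (simp add: pos_le_divide_eq pos_divide_le_eq mult.commute)
qed

lemma fun_upd_in_Gamma_Q:
  assumes "F \<in> Gamma_Q q" "(a, b, c) \<in> S_Q q" "1 < c"
    and "v / q (phi_Q q (a, b, c)) \<in> {(real c - 1) / real a - 1 / (2 * real a ^ 2) ..
                                       (real c - 1) / real a + 1 / (2 * real a ^ 2)}"
  shows "F((a, b, c) := v) \<in> Gamma_Q q"
  using assms unfolding Gamma_Q_def by auto

lemma exists_Gamma_Q_near:
  assumes "basic_seq q" "infinite_in_limit q" "F \<in> Gamma_Q q" "2 \<le> a"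
  shows "\<exists>G\<in>Gamma_Q q. G \<noteq> F \<and> dQ q F G \<le> (1 / 2) ^ a"
proof -
  define x where "x = (a, 1::nat, 2::nat)"
  have x: "x \<in> S_Q q"
    using assms(4) l_step_ge_1[of q a] by (simp add: x_def S_Q_def lseq_def)
  have phi_x: "phi_Q q x = Lseq q (a - 1) + 2"
    by (simp add: x_def phi_Q_def)
  have "nu q (a - 1 + 1) \<le> Lseq q (a - 1) + 1"
    using assms(4) by (intro nu_le_Lseq) simp
  then have "nu q a \<le> phi_Q q x"
    using assms(4) phi_x by simp
  then have "2 * int a ^ 2 \<le> q (phi_Q q x)"
    by (rule q_ge_beyond_nu[OF assms(2)])
  then have "real_of_int (2 * int a ^ 2) \<le> real_of_int (q (phi_Q q x))"
    by (simp only: of_int_le_iff)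
  then have "2 * real a ^ 2 \<le> real_of_int (q (phi_Q q x))"
    by simp
  from exists_admissible_value_avoiding[OF _ this, of "F x" 2] assms(4)
  obtain v :: int where v: "v \<noteq> F x"
    and adm: "v / q (phi_Q q x) \<in> {(real 2 - 1) / real a - 1 / (2 * real a ^ 2) ..
                                      (real 2 - 1) / real a + 1 / (2 * real a ^ 2)}"
    by auto
  have G: "F(x := v) \<in> Gamma_Q q"
    using fun_upd_in_Gamma_Q[OF assms(3) _ _ adm[unfolded x_def]] x unfolding x_def by simp
  have G_ne: "F(x := v) \<noteq> F"
    using v by (metis fun_upd_same)
  have "a \<le> zeta q F (F(x := v)) - 1"
    using zeta_fun_upd[OF x, of v F] v phi_x Lseq_ge[of "a - 1" q] by simp
  then have "(1 / 2 :: real) ^ (zeta q F (F(x := v)) - 1) \<le> (1 / 2) ^ a"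
    by (rule power_decreasing) auto
  then have "dQ q F (F(x := v)) \<le> (1 / 2) ^ a"
    using dQ_le_half_power[OF assms(1) G_ne[symmetric]] by linarith
  then show ?thesis
    using G G_ne by blast
qed

theorem mainTheorem19:
  fixes q :: "nat \<Rightarrow> int" and F :: "nat \<times> nat \<times> nat \<Rightarrow> int"
  assumes "basic_seq q" and "infinite_in_limit q" and "F \<in> Gamma_Q q"
  shows "\<exists>Fs :: nat \<Rightarrow> (nat \<times> nat \<times> nat \<Rightarrow> int).
           (\<forall>n. Fs n \<in> Gamma_Q q \<and> Fs n \<noteq> F) \<and> (\<lambda>n. dQ q F (Fs n)) \<longlonglongrightarrow> 0"
proof -
  have "\<forall>n. \<exists>G. G \<in> Gamma_Q q \<and> G \<noteq> F \<and> dQ q F G \<le> (1 / 2) ^ (n + 2)"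
  proof
    fix n
    show "\<exists>G. G \<in> Gamma_Q q \<and> G \<noteq> F \<and> dQ q F G \<le> (1 / 2) ^ (n + 2)"
      using exists_Gamma_Q_near[OF assms, of "n + 2"] by auto
  qed
  from choice[OF this] obtain Fs
    where Fs: "\<forall>n. Fs n \<in> Gamma_Q q \<and> Fs n \<noteq> F \<and> dQ q F (Fs n) \<le> (1 / 2) ^ (n + 2)"
    by blast
  have "(\<lambda>n. (1 / 2 :: real) ^ (n + 2)) \<longlonglongrightarrow> 0"
    using LIMSEQ_ignore_initial_segment[OF LIMSEQ_power_zero, of "1 / 2 :: real" 2] by simp
  then have "(\<lambda>n. dQ q F (Fs n)) \<longlonglongrightarrow> 0"
  proof (rule tendsto_sandwich[OF _ _ tendsto_const, rotated 2])
    show "\<forall>\<^sub>F n in sequentially. 0 \<le> dQ q F (Fs n)"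
      using dQ_nonneg[OF assms(1)] by simp
    show "\<forall>\<^sub>F n in sequentially. dQ q F (Fs n) \<le> (1 / 2) ^ (n + 2)"
      using Fs by simp
  qed
  then show ?thesis
    using Fs by blast
qed

end
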